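(* Let $\Phi(f)(x,y)=1-f(1-x,1-y)$. If $\otimes$ is a uninorm satisfying properties $A$ and $B$, then the rearrangement inequality and the dual rearrangement inequality hold for $(\otimes,\Phi(\otimes))$. If $\oplus$ is a uninorm satisfying properties $A'$ and $B'$, then the rearrangement inequality and the dual rearrangement inequality hold for $(\Phi(\oplus),\oplus)$.
   Context: A uninorm is a function $\otimes:[0,1]^2\to[0,1]$ that is commutative, associative, monotonic ($x\leq y$ implies $x\otimes z\leq y\otimes z$), and has an identity element $e\in[0,1]$ (note $\Phi$ of a uninorm is again a uninorm). Properties of $f:[0,1]^2\to[0,1]$: $A$: for all $0\leq x\leq y\leq z\leq w\leq 1$, $w+x\leq y+z\Rightarrow f(x,w)\leq f(y,z)$; $A'$: for all $0\leq x\leq y\leq z\leq w\leq 1$, $w+x\geq y+z\Rightarrow f(x,w)\geq f(y,z)$; $B$: for all $0\leq x\leq y\leq 1$, $0\leq z\leq w\leq1$, $f(x,w)-f(x,z)\leq f(y,w)-f(y,z)$; $B'$: same with $\geq$. For uninorms, $(\otimes,\oplus)$ satisfies the rearrangement inequality if for every $n\geq1$, all $0\leq x_1\leq\cdots\leq x_n\leq 1$, $0\leq y_1\leq\cdots\leq y_n\leq 1$ and every permutation $\sigma$ of $\{1,\dots,n\}$, $$(x_n\otimes y_1)\oplus\cdots\oplus(x_1\otimes y_n)\leq (x_{\sigma(1)}\otimes y_1)\oplus\cdots\oplus(x_{\sigma(n)}\otimes y_n)\leq (x_1\otimes y_1)\oplus\cdots\oplus(x_n\otimes y_n),$$ and the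 dual rearrangement inequality if for all such data $$(x_n\oplus y_1)\otimes\cdots\otimes(x_1\oplus y_n)\geq (x_{\sigma(1)}\oplus y_1)\otimes\cdots\otimes(x_{\sigma(n)}\oplus y_n)\geq (x_1\oplus y_1)\otimes\cdots\otimes(x_n\oplus y_n).$$ *)

theory Defs
  imports "HOL-Analysis.Analysis" "HOL-Combinatorics.Permutations"
begin


definition uninorm :: "(real \<Rightarrow> real \<Rightarrow> real) \<Rightarrow> bool" where
  "uninorm f \<longleftrightarrow>
     (\<forall>x\<in>{0..1}. \<forall>y\<in>{0..1}. f x y \<in> {0..1}) \<and>
     (\<forall>x\<in>{0..1}. \<forall>y\<in>{0..1}. f x y = f y x) \<and>
     (\<forall>x\<in>{0..1}. \<forall>y\<in>{0..1}. \<forall>z\<in>{0..1}. f (f x y) z = f x (f y z)) \<and>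
     (\<forall>x\<in>{0..1}. \<forall>y\<in>{0..1}. \<forall>z\<in>{0..1}. x \<le> y \<longrightarrow> f x z \<le> f y z) \<and>
     (\<exists>e\<in>{0..1}. \<forall>x\<in>{0..1}. f e x = x)"

definition Phi :: "(real \<Rightarrow> real \<Rightarrow> real) \<Rightarrow> real \<Rightarrow> real \<Rightarrow> real" where
  "Phi f x y = 1 - f (1 - x) (1 - y)"

definition propA :: "(real \<Rightarrow> real \<Rightarrow> real) \<Rightarrow> bool" where
  "propA f \<longleftrightarrow> (\<forall>x y z w. 0 \<le> x \<and> x \<le> y \<and> y \<le> z \<and> z \<le> w \<and> w \<le> 1 \<longrightarrow>
      w + x \<le> y + z \<longrightarrow> f x w \<le> f y z)"

definition propA' :: "(real \<Rightarrow> real \<Rightarrow> real) \<Rightarrow> bool" where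
  "propA' f \<longleftrightarrow> (\<forall>x y z w. 0 \<le> x \<and> x \<le> y \<and> y \<le> z \<and> z \<le> w \<and> w \<le> 1 \<longrightarrow>
      w + x \<ge> y + z \<longrightarrow> f x w \<ge> f y z)"

definition propB :: "(real \<Rightarrow> real \<Rightarrow> real) \<Rightarrow> bool" where
  "propB f \<longleftrightarrow> (\<forall>x y z w. 0 \<le> x \<and> x \<le> y \<and> y \<le> 1 \<and> 0 \<le> z \<and> z \<le> w \<and> w \<le> 1 \<longrightarrow>
      f x w - f x z \<le> f y w - f y z)"

definition propB' :: "(real \<Rightarrow> real \<Rightarrow> real) \<Rightarrow> bool" where
  "propB' f \<longleftrightarrow> (\<forall>x y z w. 0 \<le> x \<and> x \<le> y \<and> y \<le> 1 \<and> 0 \<le> z \<and> z \<le> w \<and> w \<le> 1 \<longrightarrow>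
      f x w - f x z \<ge> f y w - f y z)"

fun iter :: "(real \<Rightarrow> real \<Rightarrow> real) \<Rightarrow> (nat \<Rightarrow> real) \<Rightarrow> nat \<Rightarrow> real" where
  "iter f a 0 = a 0"
| "iter f a (Suc k) = f (iter f a k) (a (Suc k))"

definition bigop :: "(real \<Rightarrow> real \<Rightarrow> real) \<Rightarrow> nat \<Rightarrow> (nat \<Rightarrow> real) \<Rightarrow> real" where
  "bigop f n a = iter f a (n - 1)"

text \<open>Indices 0..n-1 stand for 1..n of the paper.\<close>
definition rearrangement :: "(real \<Rightarrow> real \<Rightarrow> real) \<Rightarrow> (real \<Rightarrow> real \<Rightarrow> real) \<Rightarrow> bool" where
  "rearrangement otimes oplus \<longleftrightarrow>
    (\<forall>n::nat. \<forall>x y :: nat \<Rightarrow> real. \<forall>\<sigma>.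
      n \<ge> 1 \<longrightarrow>
      (\<forall>i<n. 0 \<le> x i \<and> x i \<le> 1 \<and> 0 \<le> y i \<and> y i \<le> 1) \<longrightarrow>
      (\<forall>i j. i \<le> j \<and> j < n \<longrightarrow> x i \<le> x j \<and> y i \<le> y j) \<longrightarrow>
      \<sigma> permutes {..<n} \<longrightarrow>
      bigop oplus n (\<lambda>i. otimes (x (n - 1 - i)) (y i))
        \<le> bigop oplus n (\<lambda>i. otimes (x (\<sigma> i)) (y i)) \<and>
      bigop oplus n (\<lambda>i. otimes (x (\<sigma> i)) (y i))
        \<le> bigop oplus n (\<lambda>i. otimes (x i) (y i)))"

definition dual_rearrangement :: "(real \<Rightarrow> real \<Rightarrow> real) \<Rightarrow> (real \<Rightarrow> real \<Rightarrow> real) \<Rightarrow> bool" where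
  "dual_rearrangement otimes oplus \<longleftrightarrow>
    (\<forall>n::nat. \<forall>x y :: nat \<Rightarrow> real. \<forall>\<sigma>.
      n \<ge> 1 \<longrightarrow>
      (\<forall>i<n. 0 \<le> x i \<and> x i \<le> 1 \<and> 0 \<le> y i \<and> y i \<le> 1) \<longrightarrow>
      (\<forall>i j. i \<le> j \<and> j < n \<longrightarrow> x i \<le> x j \<and> y i \<le> y j) \<longrightarrow>
      \<sigma> permutes {..<n} \<longrightarrow>
      bigop otimes n (\<lambda>i. oplus (x (n - 1 - i)) (y i))
        \<ge> bigop otimes n (\<lambda>i. oplus (x (\<sigma> i)) (y i)) \<and>
      bigop otimes n (\<lambda>i. oplus (x (\<sigma> i)) (y i))
        \<ge> bigop otimes n (\<lambda>i. oplus (x i) (y i)))"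

end

theory Submission
  imports Defs
begin

text \<open>
  Both inequalities are instances of one statement about a table \<open>H\<close> on \<open>{0..n}\<^sup>2\<close> with
  entries in [0,1]: if \<open>H\<close> is supermodular with respect to a uninorm \<open>f\<close>, then among the
  \<open>f\<close>-products of the permuted diagonals \<open>H (\<sigma> i) i\<close> the main diagonal is the largest and
  the antidiagonal the smallest. For the maximum, one transposition puts the last row in place
  without decreasing the product, and induction on \<open>n\<close> does the rest; the minimum is the
  maximum for the dual operation \<open>Phi f\<close> applied to the row-reversed, complemented table.
  Properties A and B of \<open>\<otimes>\<close> imply that \<open>H a i = x a \<otimes> y i\<close> is supermodular for
  \<open>Phi \<otimes>\<close> when \<open>x\<close>, \<open>y\<close> are similarly ordered. The dual inequality is the same statement for
  the complemented (hence reversely sorted) sequences, and the claims about \<open>\<oplus>\<close> follow by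
  applying those about \<open>\<otimes>\<close> to \<open>Phi \<oplus>\<close>.
\<close>

lemma uninorm_closed: "uninorm f \<Longrightarrow> x \<in> {0..1} \<Longrightarrow> y \<in> {0..1} \<Longrightarrow> f x y \<in> {0..1}"
  unfolding uninorm_def by blast

lemma uninorm_commute: "uninorm f \<Longrightarrow> x \<in> {0..1} \<Longrightarrow> y \<in> {0..1} \<Longrightarrow> f x y = f y x"
  unfolding uninorm_def by blast

lemma uninorm_assoc:
  "uninorm f \<Longrightarrow> x \<in> {0..1} \<Longrightarrow> y \<in> {0..1} \<Longrightarrow> z \<in> {0..1} \<Longrightarrow> f (f x y) z = f x (f y z)"
  unfolding uninorm_def by blast

lemma uninorm_mono:
  assumes "uninorm f" "x \<in> {0..1}" "y \<in> {0..1}" "u \<in> {0..1}" "v \<in> {0..1}" "x \<le> y" "u \<le> v"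
  shows "f x u \<le> f y v"
proof -
  have mono_left: "\<And>x y z. x \<in> {0..1} \<Longrightarrow> y \<in> {0..1} \<Longrightarrow> z \<in> {0..1} \<Longrightarrow> x \<le> y \<Longrightarrow> f x z \<le> f y z"
    using assms(1) unfolding uninorm_def by blast
  have "f x u \<le> f y u" using mono_left assms by blast
  also have "f y u = f u y" using uninorm_commute assms by blast
  also have "\<dots> \<le> f v y" using mono_left assms by blast
  also have "\<dots> = f y v" using uninorm_commute assms by blast
  finally show ?thesis .
qed

lemma uninorm_neutralE:
  assumes "uninorm f"
  obtains e where "e \<in> {0..1}" "\<And>x. x \<in> {0..1} \<Longrightarrow> f e x = x" "\<And>x. x \<in> {0..1} \<Longrightarrow> f x e = x"
  using assms uninorm_commute unfolding uninorm_def by metis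

lemma Phi_Phi [simp]: "Phi (Phi f) = f"
  by (simp add: Phi_def fun_eq_iff)

lemma uninorm_Phi:
  assumes f: "uninorm f"
  shows "uninorm (Phi f)"
proof -
  have compl: "1 - x \<in> {0..1}" if "x \<in> {0..1}" for x :: real
    using that by auto
  obtain e where e: "e \<in> {0..1}" "\<And>x. x \<in> {0..1} \<Longrightarrow> f e x = x"
    using uninorm_neutralE[OF f] by metis
  show ?thesis
    unfolding uninorm_def
  proof (intro conjI ballI impI)
    fix x y :: real assume xy: "x \<in> {0..1}" "y \<in> {0..1}"
    show "Phi f x y \<in> {0..1}"
      using uninorm_closed[OF f compl compl] xy by (auto simp: Phi_def)
    show "Phi f x y = Phi f y x"
      using uninorm_commute[OF f compl compl] xy by (simp add: Phi_def)
    fix z :: real assume z: "z \<in> {0..1}"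
    show "Phi f (Phi f x y) z = Phi f x (Phi f y z)"
      using uninorm_assoc[OF f compl compl compl] xy z by (simp add: Phi_def)
    assume "x \<le> y"
    then show "Phi f x z \<le> Phi f y z"
      using uninorm_mono[OF f compl compl compl compl] xy z by (simp add: Phi_def)
  next
    show "\<exists>e'\<in>{0..1}. \<forall>x\<in>{0..1}. Phi f e' x = x"
      using e compl by (intro bexI[of _ "1 - e"]) (auto simp: Phi_def)
  qed
qed

lemma iter_cong: "(\<And>i. i \<le> n \<Longrightarrow> c i = d i) \<Longrightarrow> iter f c n = iter f d n"
  by (induction n) auto

lemma iter_closed:
  assumes f: "uninorm f" and c: "\<And>i. i \<le> n \<Longrightarrow> c i \<in> {0..1}"
  shows "iter f c n \<in> {0..1}"
  using c
proof (induction n)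
  case (Suc n)
  then show ?case using uninorm_closed[OF f] by simp
qed simp

lemma iter_Phi: "iter (Phi f) (\<lambda>i. 1 - c i) n = 1 - iter f c n"
  by (induction n) (simp_all add: Phi_def)

lemma iter_remove:
  assumes f: "uninorm f"
    and e: "e \<in> {0..1}" "\<And>x. x \<in> {0..1} \<Longrightarrow> f e x = x"
    and c: "\<And>i. i \<le> n \<Longrightarrow> c i \<in> {0..1}" and "k \<le> n"
  shows "iter f c n = f (iter f (c(k := e)) n) (c k)"
  using c \<open>k \<le> n\<close>
proof (induction n)
  case 0
  then show ?case using e by simp
next
  case (Suc n)
  have d: "\<And>i. i \<le> Suc n \<Longrightarrow> (c(k := e)) i \<in> {0..1}"
    using Suc.prems(1) e(1) by simp
  show ?case
  proof (cases "k = Suc n")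
    case True
    have "iter f (c(k := e)) (Suc n) = f (iter f c n) e"
      using iter_cong[of n "c(k := e)" c f] True by simp
    also have "\<dots> = iter f c n"
    proof -
      have "iter f c n \<in> {0..1}"
        using iter_closed[OF f] Suc.prems(1) by simp
      then show ?thesis using e uninorm_commute[OF f] by metis
    qed
    finally have "iter f (c(k := e)) (Suc n) = iter f c n" .
    then show ?thesis using True by (metis iter.simps(2))
  next
    case False
    let ?d = "c(k := e)"
    have k: "k \<le> n" using False Suc.prems(2) by simp
    have in01: "iter f ?d n \<in> {0..1}" "c k \<in> {0..1}" "c (Suc n) \<in> {0..1}"
      using iter_closed[OF f, of n ?d] d Suc.prems(1) k by simp_all
    have "iter f c n = f (iter f ?d n) (c k)"
      by (rule Suc.IH) (use Suc.prems(1) k in simp_all)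
    then have "iter f c (Suc n) = f (f (iter f ?d n) (c k)) (c (Suc n))"
      by (simp only: iter.simps)
    also have "\<dots> = f (f (iter f ?d n) (c (Suc n))) (c k)"
      using uninorm_assoc[OF f] uninorm_commute[OF f] in01 by metis
    also have "\<dots> = f (iter f ?d (Suc n)) (c k)"
      using False by simp
    finally show ?thesis .
  qed
qed

lemma iter_exchange_mono:
  assumes f: "uninorm f"
    and c: "\<And>i. i \<le> n \<Longrightarrow> c i \<in> {0..1}" and d: "\<And>i. i \<le> n \<Longrightarrow> d i \<in> {0..1}"
    and kl: "k \<le> n" "l \<le> n" "k \<noteq> l"
    and agree: "\<And>i. i \<le> n \<Longrightarrow> i \<noteq> k \<Longrightarrow> i \<noteq> l \<Longrightarrow> c i = d i"
    and le: "f (c k) (c l) \<le> f (d k) (d l)"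
  shows "iter f c n \<le> iter f d n"
proof -
  obtain e where e: "e \<in> {0..1}" "\<And>x. x \<in> {0..1} \<Longrightarrow> f e x = x"
    using uninorm_neutralE[OF f] by metis
  have remove2: "iter f a n = f (iter f (a(k := e, l := e)) n) (f (a k) (a l))"
    if a: "\<And>i. i \<le> n \<Longrightarrow> a i \<in> {0..1}" for a
  proof -
    have a': "\<And>i. i \<le> n \<Longrightarrow> (a(k := e)) i \<in> {0..1}"
      using a e(1) by simp
    have in01: "iter f (a(k := e, l := e)) n \<in> {0..1}" "a k \<in> {0..1}" "a l \<in> {0..1}"
      using iter_closed[OF f, of n "a(k := e, l := e)"] a e(1) kl by simp_all
    have "iter f (a(k := e)) n = f (iter f (a(k := e, l := e)) n) ((a(k := e)) l)"
      by (rule iter_remove[OF f e a' kl(2)])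
    then have "iter f (a(k := e)) n = f (iter f (a(k := e, l := e)) n) (a l)"
      using kl(3) by simp
    then have "iter f a n = f (f (iter f (a(k := e, l := e)) n) (a l)) (a k)"
      using iter_remove[OF f e a kl(1)] by simp
    also have "\<dots> = f (iter f (a(k := e, l := e)) n) (f (a k) (a l))"
      using uninorm_assoc[OF f] uninorm_commute[OF f] in01 by metis
    finally show ?thesis .
  qed
  have "iter f (c(k := e, l := e)) n = iter f (d(k := e, l := e)) n"
    by (rule iter_cong) (simp add: agree)
  moreover have "iter f (d(k := e, l := e)) n \<in> {0..1}"
    by (rule iter_closed[OF f]) (use d e(1) in auto)
  moreover have "f (c k) (c l) \<in> {0..1}" "f (d k) (d l) \<in> {0..1}"
    using uninorm_closed[OF f] c d kl by simp_all
  ultimately show ?thesis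
    using remove2[OF c] remove2[OF d] le uninorm_mono[OF f] by simp
qed

text \<open>For \<open>f = (+)\<close> this is ordinary supermodularity of \<open>H\<close>.\<close>

definition supermodular :: "(real \<Rightarrow> real \<Rightarrow> real) \<Rightarrow> nat \<Rightarrow> (nat \<Rightarrow> nat \<Rightarrow> real) \<Rightarrow> bool" where
  "supermodular f n H \<longleftrightarrow>
     (\<forall>a b i j. a \<le> b \<longrightarrow> b \<le> n \<longrightarrow> i \<le> j \<longrightarrow> j \<le> n \<longrightarrow> f (H a j) (H b i) \<le> f (H a i) (H b j))"

lemma supermodular_mono: "supermodular f n H \<Longrightarrow> m \<le> n \<Longrightarrow> supermodular f m H"
  unfolding supermodular_def by auto

lemma iter_transpose_last_mono:
  assumes f: "uninorm f" and H: "\<And>a i. a \<le> n \<Longrightarrow> i \<le> n \<Longrightarrow> H a i \<in> {0..1}"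
    and sm: "supermodular f n H" and \<sigma>: "\<sigma> permutes {..n}"
  shows "iter f (\<lambda>i. H (\<sigma> i) i) n \<le> iter f (\<lambda>i. H ((Transposition.transpose n (\<sigma> n) \<circ> \<sigma>) i) i) n"
    (is "_ \<le> iter f (\<lambda>i. H (?\<tau> i) i) n")
proof (cases "\<sigma> n = n")
  case True
  then show ?thesis by simp
next
  case False
  define k where "k = inv \<sigma> n"
  have \<sigma>k: "\<sigma> k = n"
    using permutes_inverses(1)[OF \<sigma>] by (simp add: k_def)
  with False have "k \<noteq> n"
    by auto
  have range: "\<sigma> i \<le> n" if "i \<le> n" for i
    using permutes_in_image[OF \<sigma>] that by simp
  have "k \<le> n"
    using permutes_in_image[OF \<sigma>, of k] \<sigma>k by simp
  show ?thesis
  proof (rule iter_exchange_mono[OF f _ _ \<open>k \<le> n\<close> order_refl \<open>k \<noteq> n\<close>])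
    show "H (\<sigma> i) i \<in> {0..1}" "H (?\<tau> i) i \<in> {0..1}" if "i \<le> n" for i
      using H range that by (auto simp: Transposition.transpose_def)
    show "H (\<sigma> i) i = H (?\<tau> i) i" if "i \<le> n" "i \<noteq> k" "i \<noteq> n" for i
      using that \<sigma>k permutes_inj[OF \<sigma>] by (auto simp: Transposition.transpose_def dest: injD)
    have "f (H (\<sigma> n) n) (H n k) \<le> f (H (\<sigma> n) k) (H n n)"
      using sm range[of n] \<open>k \<le> n\<close> unfolding supermodular_def by blast
    then show "f (H (\<sigma> k) k) (H (\<sigma> n) n) \<le> f (H (?\<tau> k) k) (H (?\<tau> n) n)"
      using \<sigma>k uninorm_commute[OF f H H] range[of n] \<open>k \<le> n\<close> by simp
  qed
qed

lemma iter_permuted_le_diagonal: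
  assumes f: "uninorm f" and H: "\<And>a i. a \<le> n \<Longrightarrow> i \<le> n \<Longrightarrow> H a i \<in> {0..1}"
    and sm: "supermodular f n H" and \<sigma>: "\<sigma> permutes {..n}"
  shows "iter f (\<lambda>i. H (\<sigma> i) i) n \<le> iter f (\<lambda>i. H i i) n"
  using H sm \<sigma>
proof (induction n arbitrary: \<sigma>)
  case 0
  then have "\<sigma> 0 = 0"
    using permutes_in_image[of \<sigma> "{..0}" 0] by simp
  then show ?case by simp
next
  case (Suc n)
  define \<tau> where "\<tau> = Transposition.transpose (Suc n) (\<sigma> (Suc n)) \<circ> \<sigma>"
  have \<tau>: "\<tau> permutes {..n}"
    using permutes_insert_lemma[of \<sigma> "Suc n" "{..n}"] Suc.prems(3) by (simp add: \<tau>_def atMost_Suc)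
  have "iter f (\<lambda>i. H (\<sigma> i) i) (Suc n) \<le> iter f (\<lambda>i. H (\<tau> i) i) (Suc n)"
    unfolding \<tau>_def by (rule iter_transpose_last_mono[OF f Suc.prems])
  also have "\<dots> = f (iter f (\<lambda>i. H (\<tau> i) i) n) (H (Suc n) (Suc n))"
    by (simp add: \<tau>_def)
  also have "\<dots> \<le> f (iter f (\<lambda>i. H i i) n) (H (Suc n) (Suc n))"
  proof -
    have "iter f (\<lambda>i. H (\<tau> i) i) n \<le> iter f (\<lambda>i. H i i) n"
      using Suc.IH[OF _ supermodular_mono[OF Suc.prems(2)] \<tau>] Suc.prems(1) by simp
    moreover have "iter f (\<lambda>i. H (\<tau> i) i) n \<in> {0..1}"
      by (rule iter_closed[OF f]) (use Suc.prems(1) permutes_in_image[OF \<tau>] le_SucI in blast)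
    moreover have "iter f (\<lambda>i. H i i) n \<in> {0..1}"
      by (rule iter_closed[OF f]) (use Suc.prems(1) in auto)
    moreover have "H (Suc n) (Suc n) \<in> {0..1}"
      using Suc.prems(1) by simp
    ultimately show ?thesis
      using uninorm_mono[OF f] by blast
  qed
  also have "\<dots> = iter f (\<lambda>i. H i i) (Suc n)"
    by simp
  finally show ?case .
qed

lemma reverse_permutes_atMost: "(\<lambda>j. if j \<le> n then n - j else j) permutes {..n::nat}"
proof (rule bij_imp_permutes)
  show "bij_betw (\<lambda>j. if j \<le> n then n - j else j) {..n} {..n}"
    by (rule bij_betw_byWitness[where f' = "\<lambda>j. n - j"]) auto
qed simp

lemma iter_antidiagonal_le_permuted:
  assumes f: "uninorm f" and H: "\<And>a i. a \<le> n \<Longrightarrow> i \<le> n \<Longrightarrow> H a i \<in> {0..1}"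
    and sm: "supermodular f n H" and \<sigma>: "\<sigma> permutes {..n}"
  shows "iter f (\<lambda>i. H (n - i) i) n \<le> iter f (\<lambda>i. H (\<sigma> i) i) n"
proof -
  define \<rho> where "\<rho> = (\<lambda>j. if j \<le> n then n - j else j) \<circ> \<sigma>"
  define H' where "H' = (\<lambda>a i. 1 - H (n - a) i)"
  have \<rho>: "\<rho> permutes {..n}"
    unfolding \<rho>_def by (rule permutes_compose[OF \<sigma> reverse_permutes_atMost])
  have H': "H' a i \<in> {0..1}" if "a \<le> n" "i \<le> n" for a i
    using H[of "n - a" i] that by (auto simp: H'_def)
  txt \<open>Reversing the rows reverses the exchange inequality; complementing the entries
    restores it for the dual operation.\<close>
  have "supermodular (Phi f) n H'"
    unfolding supermodular_def
  proof (intro allI impI)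
    fix a b i j assume "a \<le> b" "b \<le> n" "i \<le> j" "j \<le> n"
    moreover from this have "f (H (n - b) j) (H (n - a) i) \<le> f (H (n - b) i) (H (n - a) j)"
      using sm unfolding supermodular_def by simp
    ultimately show "Phi f (H' a j) (H' b i) \<le> Phi f (H' a i) (H' b j)"
      using uninorm_commute[OF f H H] by (simp add: Phi_def H'_def)
  qed
  then have "iter (Phi f) (\<lambda>i. H' (\<rho> i) i) n \<le> iter (Phi f) (\<lambda>i. H' i i) n"
    using iter_permuted_le_diagonal[OF uninorm_Phi[OF f], of n H', OF H' _ \<rho>] by blast
  moreover have "iter (Phi f) (\<lambda>i. H' (\<rho> i) i) n = iter (Phi f) (\<lambda>i. 1 - H (\<sigma> i) i) n"
    by (rule iter_cong) (use permutes_in_image[OF \<sigma>] in \<open>simp add: H'_def \<rho>_def\<close>)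
  ultimately show ?thesis
    by (simp add: H'_def iter_Phi)
qed

lemma propA_outer_le_inner:
  assumes f: "uninorm f" and A: "propA f"
    and "\<alpha> \<le> \<beta>" "\<alpha> \<le> \<gamma>" "\<beta> \<le> \<delta>" "\<gamma> \<le> \<delta>" "0 \<le> \<alpha>" "\<delta> \<le> 1" "\<alpha> + \<delta> \<le> \<beta> + \<gamma>"
  shows "f \<alpha> \<delta> \<le> f \<beta> \<gamma>"
proof (cases "\<beta> \<le> \<gamma>")
  case True
  then show ?thesis
    using A assms(3-) unfolding propA_def by (simp add: add.commute)
next
  case False
  then have "f \<alpha> \<delta> \<le> f \<gamma> \<beta>"
    using A assms(3-) unfolding propA_def by (simp add: add.commute)
  also have "f \<gamma> \<beta> = f \<beta> \<gamma>"
    using uninorm_commute[OF f] assms(3-) by simp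
  finally show ?thesis .
qed

lemma Phi_exchange_le:
  assumes f: "uninorm f" and A: "propA f" and B: "propB f"
    and "p \<le> q" "r \<le> s" "p \<in> {0..1}" "q \<in> {0..1}" "r \<in> {0..1}" "s \<in> {0..1}"
  shows "Phi f (f p s) (f q r) \<le> Phi f (f p r) (f q s)"
proof -
  have in01: "f p r \<in> {0..1}" "f p s \<in> {0..1}" "f q r \<in> {0..1}" "f q s \<in> {0..1}"
    using uninorm_closed[OF f] assms(6-9) by simp_all
  have "f p s \<le> f q s" "f q r \<le> f q s" "f p r \<le> f p s" "f p r \<le> f q r"
    using uninorm_mono[OF f] assms(4-9) by simp_all
  txt \<open>Property B is the sum condition of property A for the complemented products.\<close>
  moreover have "f p s - f p r \<le> f q s - f q r"
    using B assms(4-9) unfolding propB_def by simp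
  ultimately have "f (1 - f q s) (1 - f p r) \<le> f (1 - f p s) (1 - f q r)"
    using in01 by (intro propA_outer_le_inner[OF f A]) simp_all
  then show ?thesis
    using uninorm_commute[OF f] in01 by (simp add: Phi_def)
qed

lemma supermodular_Phi_table:
  assumes f: "uninorm f" and A: "propA f" and B: "propB f"
    and x: "\<And>a. a \<le> n \<Longrightarrow> x a \<in> {0..1}" and y: "\<And>i. i \<le> n \<Longrightarrow> y i \<in> {0..1}"
    and similar: "mono_on {..n} x \<and> mono_on {..n} y \<or> antimono_on {..n} x \<and> antimono_on {..n} y"
  shows "supermodular (Phi f) n (\<lambda>a i. f (x a) (y i))"
  unfolding supermodular_def
proof (intro allI impI)
  fix a b i j :: nat
  assume ab: "a \<le> b" "b \<le> n" and ij: "i \<le> j" "j \<le> n"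
  then have in01: "x a \<in> {0..1}" "x b \<in> {0..1}" "y i \<in> {0..1}" "y j \<in> {0..1}"
    using x y by simp_all
  from similar show "Phi f (f (x a) (y j)) (f (x b) (y i)) \<le> Phi f (f (x a) (y i)) (f (x b) (y j))"
  proof
    assume "mono_on {..n} x \<and> mono_on {..n} y"
    then have "x a \<le> x b" "y i \<le> y j"
      using ab ij by (simp_all add: monotone_on_def)
    then show ?thesis
      using Phi_exchange_le[OF f A B] in01 by simp
  next
    assume "antimono_on {..n} x \<and> antimono_on {..n} y"
    then have "x b \<le> x a" "y j \<le> y i"
      using ab ij by (simp_all add: monotone_on_def)
    then have "Phi f (f (x b) (y i)) (f (x a) (y j)) \<le> Phi f (f (x b) (y j)) (f (x a) (y i))"
      using Phi_exchange_le[OF f A B] in01 by simp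
    then show ?thesis
      using uninorm_commute[OF uninorm_Phi[OF f]] uninorm_closed[OF f] in01 by simp
  qed
qed

lemma rearrangement_Phi:
  assumes f: "uninorm f" and A: "propA f" and B: "propB f"
  shows "rearrangement f (Phi f)"
  unfolding rearrangement_def
proof (intro allI impI)
  fix n :: nat and x y :: "nat \<Rightarrow> real" and \<sigma> :: "nat \<Rightarrow> nat"
  assume "1 \<le> n" and unit: "\<forall>i<n. 0 \<le> x i \<and> x i \<le> 1 \<and> 0 \<le> y i \<and> y i \<le> 1"
    and sorted: "\<forall>i j. i \<le> j \<and> j < n \<longrightarrow> x i \<le> x j \<and> y i \<le> y j"
    and \<sigma>: "\<sigma> permutes {..<n}"
  then obtain m where n: "n = Suc m"
    by (cases n) auto
  let ?H = "\<lambda>a i. f (x a) (y i)"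
  have H: "?H a i \<in> {0..1}" if "a \<le> m" "i \<le> m" for a i
    using uninorm_closed[OF f] unit that n by simp
  have "mono_on {..m} x \<and> mono_on {..m} y"
    using sorted n by (auto intro!: monotone_onI)
  then have "supermodular (Phi f) m ?H"
    using supermodular_Phi_table[OF f A B] unit n by simp
  then show "bigop (Phi f) n (\<lambda>i. f (x (n - 1 - i)) (y i)) \<le> bigop (Phi f) n (\<lambda>i. f (x (\<sigma> i)) (y i)) \<and>
      bigop (Phi f) n (\<lambda>i. f (x (\<sigma> i)) (y i)) \<le> bigop (Phi f) n (\<lambda>i. f (x i) (y i))"
    using iter_antidiagonal_le_permuted[OF uninorm_Phi[OF f], of m ?H \<sigma>]
      iter_permuted_le_diagonal[OF uninorm_Phi[OF f], of m ?H \<sigma>] H \<sigma>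
    by (simp add: bigop_def n lessThan_Suc_atMost)
qed

lemma dual_rearrangement_Phi:
  assumes f: "uninorm f" and A: "propA f" and B: "propB f"
  shows "dual_rearrangement f (Phi f)"
  unfolding dual_rearrangement_def
proof (intro allI impI)
  fix n :: nat and x y :: "nat \<Rightarrow> real" and \<sigma> :: "nat \<Rightarrow> nat"
  assume "1 \<le> n" and unit: "\<forall>i<n. 0 \<le> x i \<and> x i \<le> 1 \<and> 0 \<le> y i \<and> y i \<le> 1"
    and sorted: "\<forall>i j. i \<le> j \<and> j < n \<longrightarrow> x i \<le> x j \<and> y i \<le> y j"
    and \<sigma>: "\<sigma> permutes {..<n}"
  then obtain m where n: "n = Suc m"
    by (cases n) auto
  let ?H = "\<lambda>a i. f (1 - x a) (1 - y i)"
  have H: "?H a i \<in> {0..1}" if "a \<le> m" "i \<le> m" for a i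
    using uninorm_closed[OF f] unit that n by simp
  have "antimono_on {..m} (\<lambda>a. 1 - x a) \<and> antimono_on {..m} (\<lambda>i. 1 - y i)"
    using sorted n by (auto intro!: monotone_onI)
  then have "supermodular (Phi f) m ?H"
    using supermodular_Phi_table[OF f A B, of m "\<lambda>a. 1 - x a" "\<lambda>i. 1 - y i"] unit n by simp
  moreover have complement: "iter f (\<lambda>i. 1 - c i) m = 1 - iter (Phi f) c m" for c
    using iter_Phi[of "Phi f"] by simp
  ultimately show "bigop f n (\<lambda>i. Phi f (x (n - 1 - i)) (y i)) \<ge> bigop f n (\<lambda>i. Phi f (x (\<sigma> i)) (y i)) \<and>
      bigop f n (\<lambda>i. Phi f (x (\<sigma> i)) (y i)) \<ge> bigop f n (\<lambda>i. Phi f (x i) (y i))"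
    using iter_antidiagonal_le_permuted[OF uninorm_Phi[OF f], of m ?H \<sigma>]
      iter_permuted_le_diagonal[OF uninorm_Phi[OF f], of m ?H \<sigma>] H \<sigma>
    by (simp add: bigop_def n lessThan_Suc_atMost Phi_def[of f])
qed

lemma propA_Phi:
  assumes f: "uninorm f" and A': "propA' f"
  shows "propA (Phi f)"
  unfolding propA_def
proof (intro allI impI)
  fix x y z w :: real
  assume "0 \<le> x \<and> x \<le> y \<and> y \<le> z \<and> z \<le> w \<and> w \<le> 1" and "w + x \<le> y + z"
  moreover from this have "f (1 - z) (1 - y) \<le> f (1 - w) (1 - x)"
    using A' unfolding propA'_def by simp
  ultimately show "Phi f x w \<le> Phi f y z"
    using uninorm_commute[OF f, of "1 - w" "1 - x"] uninorm_commute[OF f, of "1 - z" "1 - y"]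
    by (simp add: Phi_def)
qed

lemma propB_Phi:
  assumes B': "propB' f"
  shows "propB (Phi f)"
  unfolding propB_def
proof (intro allI impI)
  fix x y z w :: real
  assume "0 \<le> x \<and> x \<le> y \<and> y \<le> 1 \<and> 0 \<le> z \<and> z \<le> w \<and> w \<le> 1"
  then have "f (1 - x) (1 - z) - f (1 - x) (1 - w) \<le> f (1 - y) (1 - z) - f (1 - y) (1 - w)"
    using B' unfolding propB'_def by simp
  then show "Phi f x w - Phi f x z \<le> Phi f y w - Phi f y z"
    by (simp add: Phi_def)
qed

theorem corollary4:
  shows "(\<forall>otimes. uninorm otimes \<and> propA otimes \<and> propB otimes \<longrightarrow>
            rearrangement otimes (Phi otimes) \<and> dual_rearrangement otimes (Phi otimes)) \<and>
         (\<forall>oplus. uninorm oplus \<and> propA' oplus \<and> propB' oplus \<longrightarrow>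
            rearrangement (Phi oplus) oplus \<and> dual_rearrangement (Phi oplus) oplus)"
proof (rule conjI; intro allI impI)
  fix otimes :: "real \<Rightarrow> real \<Rightarrow> real"
  assume "uninorm otimes \<and> propA otimes \<and> propB otimes"
  then show "rearrangement otimes (Phi otimes) \<and> dual_rearrangement otimes (Phi otimes)"
    using rearrangement_Phi dual_rearrangement_Phi by blast
next
  fix oplus :: "real \<Rightarrow> real \<Rightarrow> real"
  assume "uninorm oplus \<and> propA' oplus \<and> propB' oplus"
  then have "uninorm (Phi oplus)" "propA (Phi oplus)" "propB (Phi oplus)"
    using uninorm_Phi propA_Phi propB_Phi by blast+
  then show "rearrangement (Phi oplus) oplus \<and> dual_rearrangement (Phi oplus) oplus"
    using rearrangement_Phi dual_rearrangement_Phi Phi_Phi by metis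
qed

end
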